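(* Let $G$ be a group with identity $e$, $A$ a set with at least two elements, and $\tau: A^G\to A^G$ a lazy cellular automaton with minimal neighborhood $S \subseteq G$, unique active transition $p \in A^S$ and writing symbol $a \in A \setminus \{p(e)\}$. For $b \in A$ let $S_b := p^{-1}\{b\} = \{s\in S : p(s) = b\}$. Then $\mathrm{ord}(\tau)$ is at most the minimum $n\geq 2$ (if one exists) such that for every word $(s_1, \ldots, s_{n-1})\in (S_a)^{n-1}$ there exist $1 \leq i \leq j \leq n-1$ satisfying at least one of the following: \begin{enumerate} \item $(s_j\cdots s_i)^{-1}\in S_b^{-1}S_a$ for some $b\in A\setminus\{a\}$; \item $(s_j\cdots s_i)^{-1}\in S_{b_1}^{-1}S_{b_2}$ for some $b_1, b_2\in A\setminus\{a\}$ with $b_1\neq b_2$. \end{enumerate}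
   Context: $A^G$ is the set of maps $G \to A$ with shift action $(g\cdot x)(h) := x(hg)$. A cellular automaton is a map $\tau : A^G \to A^G$ with a finite $S \subseteq G$ (a neighborhood) and $\mu : A^S \to A$ such that $\tau(x)(g) = \mu((g\cdot x)|_S)$; the minimal neighborhood is the unique neighborhood of smallest cardinality. $\tau$ is lazy with unique active transition $p \in A^S$ if there is a local defining map $\mu : A^S \to A$ with $e \in S$ such that for all $z \in A^S$: $\mu(z) = z(e)$ iff $z \neq p$; its writing symbol is $a:=\mu(p)$. $\tau^k$ is the $k$-fold composition, $\tau^0$ the identity; $\mathrm{ord}(\tau) := |\{\tau^k : k \in \mathbb{N}\}|$, $\mathbb{N}=\{0,1,\dots\}$. For $S, K \subseteq G$, $SK := \{sk : s\in S, k \in K\}$ and $S^{-1} := \{s^{-1} : s\in S\}$. *)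

theory Defs
  imports "HOL-Library.FuncSet"
begin

text \<open>The group G is a type of class group_add (not necessarily commutative),
  written additively: identity 0, product g + h, inverse - g.\<close>

definition shift :: "'g::group_add \<Rightarrow> ('g \<Rightarrow> 'a) \<Rightarrow> ('g \<Rightarrow> 'a)" where
  "shift g x = (\<lambda>h. x (h + g))"

definition is_local_rule ::
  "(('g::group_add \<Rightarrow> 'a) \<Rightarrow> ('g \<Rightarrow> 'a)) \<Rightarrow> 'g set \<Rightarrow> (('g \<Rightarrow> 'a) \<Rightarrow> 'a) \<Rightarrow> bool" where
  "is_local_rule \<tau> S \<mu> \<longleftrightarrow> finite S \<and> (\<forall>x g. \<tau> x g = \<mu> (restrict (shift g x) S))"

definition is_neighborhood ::
  "(('g::group_add \<Rightarrow> 'a) \<Rightarrow> ('g \<Rightarrow> 'a)) \<Rightarrow> 'g set \<Rightarrow> bool" where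
  "is_neighborhood \<tau> S \<longleftrightarrow> (\<exists>\<mu>. is_local_rule \<tau> S \<mu>)"

definition cellular_automaton :: "(('g::group_add \<Rightarrow> 'a) \<Rightarrow> ('g \<Rightarrow> 'a)) \<Rightarrow> bool" where
  "cellular_automaton \<tau> \<longleftrightarrow> (\<exists>S. is_neighborhood \<tau> S)"

definition minimal_neighborhood ::
  "(('g::group_add \<Rightarrow> 'a) \<Rightarrow> ('g \<Rightarrow> 'a)) \<Rightarrow> 'g set \<Rightarrow> bool" where
  "minimal_neighborhood \<tau> S \<longleftrightarrow>
     is_neighborhood \<tau> S \<and> (\<forall>S'. is_neighborhood \<tau> S' \<longrightarrow> card S \<le> card S')"

definition lazy_CA ::
  "(('g::group_add \<Rightarrow> 'a) \<Rightarrow> ('g \<Rightarrow> 'a)) \<Rightarrow> 'g set \<Rightarrow> ('g \<Rightarrow> 'a) \<Rightarrow> 'a \<Rightarrow> bool" where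
  "lazy_CA \<tau> S p a \<longleftrightarrow> p \<in> S \<rightarrow>\<^sub>E UNIV \<and>
     (\<exists>\<mu>. is_local_rule \<tau> S \<mu> \<and> 0 \<in> S \<and>
          (\<forall>z \<in> S \<rightarrow>\<^sub>E UNIV. \<mu> z = z 0 \<longleftrightarrow> z \<noteq> p) \<and> \<mu> p = a)"

definition ord_CA :: "('b \<Rightarrow> 'b) \<Rightarrow> nat" where
  "ord_CA \<tau> = card {\<tau> ^^ k | k. True}"

definition preimg :: "'g set \<Rightarrow> ('g \<Rightarrow> 'a) \<Rightarrow> 'a \<Rightarrow> 'g set" where
  "preimg S p b = {s \<in> S. p s = b}"

definition set_mult :: "'g::group_add set \<Rightarrow> 'g set \<Rightarrow> 'g set" where
  "set_mult X Y = {x + y | x y. x \<in> X \<and> y \<in> Y}"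

definition set_inv :: "'g::group_add set \<Rightarrow> 'g set" where
  "set_inv X = uminus ` X"

definition word_prod :: "(nat \<Rightarrow> 'g::group_add) \<Rightarrow> nat \<Rightarrow> nat \<Rightarrow> 'g" where
  "word_prod s i j = sum_list (map s (rev [i..<Suc j]))"

definition word_condition :: "'g::group_add set \<Rightarrow> ('g \<Rightarrow> 'a) \<Rightarrow> 'a \<Rightarrow> nat \<Rightarrow> bool" where
  "word_condition S p a n \<longleftrightarrow>
     (\<forall>s :: nat \<Rightarrow> 'g. (\<forall>k \<in> {1..n-1}. s k \<in> preimg S p a) \<longrightarrow>
        (\<exists>i j. 1 \<le> i \<and> i \<le> j \<and> j \<le> n - 1 \<and>
           ((\<exists>b. b \<noteq> a \<and>
               - word_prod s i j \<in> set_mult (set_inv (preimg S p b)) (preimg S p a)) \<or>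
            (\<exists>b1 b2. b1 \<noteq> a \<and> b2 \<noteq> a \<and> b1 \<noteq> b2 \<and>
               - word_prod s i j \<in> set_mult (set_inv (preimg S p b1)) (preimg S p b2)))))"

end

theory Submission
  imports Defs
begin

text \<open>Iterating a lazy automaton, a cell is either overwritten by the writing symbol a, after
  which it never changes again, or it keeps its initial value. A change at time m at a cell g
  requires the active pattern around g at time m, which was absent at time m - 1; so some cell
  s + g with s \<in> S_a changed at time m - 1. Following such changes backwards from time n - 1
  gives a word in S_a of length n - 1. The word condition yields two of the patterns met along
  the way, seen at different times, that overlap in a cell where one shows b1 \<noteq> a and the other
  shows b2 \<noteq> b1; this is impossible, as a cell not holding a still holds its initial value and a
  cell holding a keeps it. Hence no change happens at time n - 1, i.e. \<tau>^n = \<tau>^(n-1).\<close>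

definition pattern_occurs :: "'g set \<Rightarrow> ('g \<Rightarrow> 'a) \<Rightarrow> ('g::group_add \<Rightarrow> 'a) \<Rightarrow> 'g \<Rightarrow> bool" where
  "pattern_occurs S p x g \<longleftrightarrow> (\<forall>s\<in>S. x (s + g) = p s)"

lemma lazy_CA_apply:
  assumes "lazy_CA \<tau> S p a"
  shows "\<tau> x g = (if pattern_occurs S p x g then a else x g)"
proof -
  from assms obtain \<mu> where p: "p \<in> S \<rightarrow>\<^sub>E UNIV" and loc: "is_local_rule \<tau> S \<mu>" and "0 \<in> S"
    and \<mu>: "\<forall>z \<in> S \<rightarrow>\<^sub>E UNIV. \<mu> z = z 0 \<longleftrightarrow> z \<noteq> p" and "\<mu> p = a"
    unfolding lazy_CA_def by blast
  define z where "z = restrict (shift g x) S"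
  have "\<tau> x g = \<mu> z" using loc unfolding is_local_rule_def z_def by blast
  moreover have "z \<in> S \<rightarrow>\<^sub>E UNIV" unfolding z_def by simp
  moreover have "z = p \<longleftrightarrow> pattern_occurs S p x g"
    using p unfolding z_def shift_def pattern_occurs_def
    by (auto simp: fun_eq_iff PiE_iff extensional_def)
  moreover have "z 0 = x g" using \<open>0 \<in> S\<close> unfolding z_def shift_def by simp
  ultimately show ?thesis using \<mu> \<open>\<mu> p = a\<close> by auto
qed

lemma word_prod_cong:
  "(\<And>k. i \<le> k \<Longrightarrow> k \<le> j \<Longrightarrow> t k = t' k) \<Longrightarrow> word_prod t i j = word_prod t' i j"
  unfolding word_prod_def by (auto intro!: arg_cong[where f = sum_list])

lemma word_prod_Suc: "i \<le> Suc j \<Longrightarrow> word_prod t i (Suc j) = t (Suc j) + word_prod t i j"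
  unfolding word_prod_def by simp

lemma word_prod_split:
  assumes "i \<le> Suc k" "k \<le> j"
  shows "word_prod t i j = word_prod t (Suc k) j + word_prod t i k"
proof -
  have "[i..<Suc j] = [i..<Suc k] @ [Suc k..<Suc j]"
    using assms upt_add_eq_append[of i "Suc k" "j - k"] by simp
  then show ?thesis unfolding word_prod_def by simp
qed

text \<open>Both alternatives of the word condition give an overlap u + c = v + c' with
  p u \<noteq> a and p u \<noteq> p v (in the first one, p v = a).\<close>
lemma word_conditionE:
  assumes "word_condition S p a n" and "\<And>k. k \<in> {1..n-1} \<Longrightarrow> s k \<in> preimg S p a"
  obtains i j u v where "1 \<le> i" "i \<le> j" "j \<le> n - 1" "u \<in> S" "v \<in> S"
    "p u \<noteq> a" "p u \<noteq> p v" "- word_prod s i j = - u + v"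
proof -
  obtain i j where ij: "1 \<le> i" "i \<le> j" "j \<le> n - 1" and
    "(\<exists>b. b \<noteq> a \<and> - word_prod s i j \<in> set_mult (set_inv (preimg S p b)) (preimg S p a)) \<or>
     (\<exists>b1 b2. b1 \<noteq> a \<and> b2 \<noteq> a \<and> b1 \<noteq> b2 \<and>
        - word_prod s i j \<in> set_mult (set_inv (preimg S p b1)) (preimg S p b2))"
    using assms(1)[unfolded word_condition_def, rule_format, of s] assms(2) by blast
  then obtain u v where "u \<in> S" "v \<in> S" "p u \<noteq> a" "p u \<noteq> p v" "- word_prod s i j = - u + v"
    unfolding set_mult_def set_inv_def preimg_def by blast
  with ij show thesis by (rule that)
qed

locale lazy_rule =
  fixes \<tau> :: "('g::group_add \<Rightarrow> 'a) \<Rightarrow> ('g \<Rightarrow> 'a)" and S :: "'g set" and p :: "'g \<Rightarrow> 'a" and a :: 'a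
  assumes rule_apply: "\<tau> x g = (if pattern_occurs S p x g then a else x g)"
begin

lemma written_stays:
  assumes "m \<le> m'" "(\<tau> ^^ m) x g = a"
  shows "(\<tau> ^^ m') x g = a"
  using assms by (induction m' rule: dec_induct) (simp_all add: rule_apply)

lemma unwritten_unchanged: "(\<tau> ^^ m) x g \<noteq> a \<Longrightarrow> (\<tau> ^^ m) x g = x g"
  by (induction m) (auto simp: rule_apply split: if_splits)

definition changes_at :: "('g \<Rightarrow> 'a) \<Rightarrow> nat \<Rightarrow> 'g \<Rightarrow> bool" where
  "changes_at x m g \<longleftrightarrow> (\<tau> ^^ Suc m) x g \<noteq> (\<tau> ^^ m) x g"

lemma changes_at_pattern: "changes_at x m g \<Longrightarrow> pattern_occurs S p ((\<tau> ^^ m) x) g"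
  unfolding changes_at_def by (auto simp: rule_apply split: if_splits)

lemma changes_at_writes: "changes_at x m g \<Longrightarrow> (\<tau> ^^ Suc m) x g = a"
  unfolding changes_at_def by (auto simp: rule_apply split: if_splits)

lemma changes_at_Suc_predecessor:
  assumes "changes_at x (Suc m) g"
  obtains s where "s \<in> preimg S p a" "changes_at x m (s + g)"
proof -
  have "\<not> pattern_occurs S p ((\<tau> ^^ m) x) g"
  proof
    assume "pattern_occurs S p ((\<tau> ^^ m) x) g"
    then have "(\<tau> ^^ Suc m) x g = a" by (simp add: rule_apply)
    with changes_at_writes[OF assms] show False
      using assms unfolding changes_at_def by simp
  qed
  then obtain s where s: "s \<in> S" "(\<tau> ^^ m) x (s + g) \<noteq> p s"
    unfolding pattern_occurs_def by blast
  moreover have "(\<tau> ^^ Suc m) x (s + g) = p s"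
    using changes_at_pattern[OF assms] s(1) unfolding pattern_occurs_def by blast
  ultimately have "changes_at x m (s + g)" unfolding changes_at_def by simp
  moreover have "p s = a"
    using changes_at_writes[OF \<open>changes_at x m (s + g)\<close>] \<open>(\<tau> ^^ Suc m) x (s + g) = p s\<close> by simp
  ultimately show thesis using that s(1) unfolding preimg_def by blast
qed

lemma changes_at_word:
  assumes "changes_at x m g"
  obtains t where "\<And>k. k \<in> {1..m} \<Longrightarrow> t k \<in> preimg S p a"
    and "\<And>l. l \<le> m \<Longrightarrow> changes_at x (m - l) (word_prod t 1 l + g)"
proof -
  have "\<exists>t. (\<forall>k\<in>{1..l}. t k \<in> preimg S p a) \<and> (\<forall>k\<le>l. changes_at x (m - k) (word_prod t 1 k + g))"
    if "l \<le> m" for l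
    using that
  proof (induction l)
    case 0
    have "word_prod t 1 0 = 0" for t :: "nat \<Rightarrow> 'g" by (simp add: word_prod_def)
    then show ?case using assms by simp
  next
    case (Suc l)
    then obtain t where t_a: "\<forall>k\<in>{1..l}. t k \<in> preimg S p a"
      and t_ch: "\<forall>k\<le>l. changes_at x (m - k) (word_prod t 1 k + g)" by auto
    have "changes_at x (Suc (m - Suc l)) (word_prod t 1 l + g)"
      using t_ch Suc.prems Suc_diff_Suc[of l m] by simp
    then obtain s where s: "s \<in> preimg S p a" "changes_at x (m - Suc l) (s + (word_prod t 1 l + g))"
      by (rule changes_at_Suc_predecessor)
    define t' where "t' = t(Suc l := s)"
    have prefix: "word_prod t' 1 k = word_prod t 1 k" if "k \<le> l" for k
      using that by (intro word_prod_cong) (simp add: t'_def)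
    have "word_prod t' 1 (Suc l) = s + word_prod t 1 l"
      using word_prod_Suc[of 1 l t'] prefix[of l] by (simp add: t'_def)
    then have "changes_at x (m - k) (word_prod t' 1 k + g)" if "k \<le> Suc l" for k
      using that t_ch prefix s(2) by (cases "k = Suc l") (simp_all add: add.assoc)
    then have "\<forall>k\<le>Suc l. changes_at x (m - k) (word_prod t' 1 k + g)" by blast
    moreover have "\<forall>k\<in>{1..Suc l}. t' k \<in> preimg S p a"
      using t_a s(1) by (auto simp: t'_def)
    ultimately show ?case by blast
  qed
  then obtain t where "\<forall>k\<in>{1..m}. t k \<in> preimg S p a"
    and "\<forall>l\<le>m. changes_at x (m - l) (word_prod t 1 l + g)" by blast
  then show thesis by (intro that) auto
qed

lemma pattern_occurrences_agree:
  assumes "pattern_occurs S p ((\<tau> ^^ m) x) c" and "pattern_occurs S p ((\<tau> ^^ m') x) c'"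
    and "m' \<le> m" and "u \<in> S" "v \<in> S" "u + c = v + c'" and "p u \<noteq> a"
  shows "p u = p v"
proof -
  have at_m: "(\<tau> ^^ m) x (u + c) = p u"
    using assms(1) \<open>u \<in> S\<close> unfolding pattern_occurs_def by blast
  have at_m': "(\<tau> ^^ m') x (u + c) = p v"
    using assms(2) \<open>v \<in> S\<close> \<open>u + c = v + c'\<close> unfolding pattern_occurs_def by simp
  have "p v \<noteq> a"
  proof
    assume "p v = a"
    then have "(\<tau> ^^ m) x (u + c) = a" using written_stays[OF \<open>m' \<le> m\<close>] at_m' by simp
    with at_m \<open>p u \<noteq> a\<close> show False by simp
  qed
  then show ?thesis
    using unwritten_unchanged[of m x "u + c"] unwritten_unchanged[of m' x "u + c"] at_m at_m'
      \<open>p u \<noteq> a\<close> by simp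
qed

lemma word_condition_stabilizes:
  assumes "word_condition S p a (Suc m)"
  shows "\<tau> ^^ Suc m = \<tau> ^^ m"
proof (intro ext, rule ccontr)
  fix x g
  assume "(\<tau> ^^ Suc m) x g \<noteq> (\<tau> ^^ m) x g"
  then have "changes_at x m g" unfolding changes_at_def .
  then obtain t where t_a: "\<And>k. k \<in> {1..m} \<Longrightarrow> t k \<in> preimg S p a"
    and t_ch: "\<And>l. l \<le> m \<Longrightarrow> changes_at x (m - l) (word_prod t 1 l + g)"
    by (rule changes_at_word) blast
  obtain i j u v where ij: "1 \<le> i" "i \<le> j" "j \<le> m" and uv: "u \<in> S" "v \<in> S"
    and "p u \<noteq> a" "p u \<noteq> p v" and w: "- word_prod t i j = - u + v"
    using assms t_a by (rule word_conditionE) auto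
  define c c' where "c = word_prod t 1 (i - 1) + g" and "c' = word_prod t 1 j + g"
  have "c' = word_prod t i j + c"
    using word_prod_split[of 1 "i - 1" j t] ij unfolding c_def c'_def by (simp add: add.assoc)
  then have "c = - word_prod t i j + c'" by simp
  then have "u + c = v + c'" using w by (simp add: add.assoc)
  moreover have "changes_at x (m - (i - 1)) c" and "changes_at x (m - j) c'"
    using t_ch[of "i - 1"] t_ch[of j] ij unfolding c_def c'_def by simp_all
  then have "pattern_occurs S p ((\<tau> ^^ (m - (i - 1))) x) c"
    and "pattern_occurs S p ((\<tau> ^^ (m - j)) x) c'"
    by (simp_all add: changes_at_pattern)
  moreover have "m - j \<le> m - (i - 1)" using ij by arith
  ultimately have "p u = p v"
    using uv \<open>p u \<noteq> a\<close> by (intro pattern_occurrences_agree)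
  with \<open>p u \<noteq> p v\<close> show False ..
qed

end

lemma funpow_range_finite_card_le:
  fixes f :: "'a \<Rightarrow> 'a"
  assumes "f ^^ Suc m = f ^^ m"
  shows "finite {f ^^ k | k. True} \<and> card {f ^^ k | k. True} \<le> Suc m"
proof -
  have stable: "f ^^ k = f ^^ m" if "m \<le> k" for k
    using that
  proof (induction k rule: dec_induct)
    case (step k)
    have "f ^^ Suc k = f \<circ> f ^^ m" using step.IH by simp
    also have "\<dots> = f ^^ Suc m" by simp
    finally show ?case using assms by (simp only:)
  qed simp
  have "f ^^ k \<in> (\<lambda>k. f ^^ k) ` {..m}" for k
    by (cases "k \<le> m") (use stable[of k] in auto)
  then have "{f ^^ k | k. True} = (\<lambda>k. f ^^ k) ` {..m}" by auto
  then show ?thesis using card_image_le[of "{..m}" "\<lambda>k. f ^^ k"] by simp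
qed

theorem theorem2:
  fixes \<tau> :: "('g::group_add \<Rightarrow> 'a) \<Rightarrow> ('g \<Rightarrow> 'a)"
    and S :: "'g set" and p :: "'g \<Rightarrow> 'a" and a :: 'a
  assumes two: "\<exists>x y :: 'a. x \<noteq> y"
    and ca: "cellular_automaton \<tau>"
    and minS: "minimal_neighborhood \<tau> S"
    and lazy: "lazy_CA \<tau> S p a"
    and a_ne: "a \<noteq> p 0"
    and ex: "\<exists>n. 2 \<le> n \<and> word_condition S p a n"
  shows "finite {\<tau> ^^ k | k. True} \<and>
         ord_CA \<tau> \<le> (LEAST n. 2 \<le> n \<and> word_condition S p a n)"
proof -
  define n where "n = (LEAST n. 2 \<le> n \<and> word_condition S p a n)"
  have "2 \<le> n" "word_condition S p a n"
    using LeastI_ex[OF ex] unfolding n_def by auto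
  then obtain m where n: "n = Suc m" and "word_condition S p a (Suc m)"
    by (cases n) auto
  interpret lazy_rule \<tau> S p a
    using lazy_CA_apply[OF lazy] by unfold_locales
  have "\<tau> ^^ Suc m = \<tau> ^^ m"
    by (rule word_condition_stabilizes) fact
  from funpow_range_finite_card_le[OF this] show ?thesis
    unfolding ord_CA_def n_def[symmetric] n .
qed

end
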